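(* There is a deterministic $1$-local $0$-memory routing algorithm on half-$\theta_6$-graphs such that for every finite point set $P$ in general position and all $u,w\in P$ with $w$ in a positive cone of $u$, the path followed when routing from $w$ to $u$ has length at most $\left(\tfrac{5}{\sqrt{3}}\cos\alpha-\sin\alpha\right)\cdot|uw|$, where $m$ is the midpoint of the side of the canonical triangle $T_{uw}$ opposite $u$ and $\alpha$ is the unsigned angle between $uw$ and $um$.
   Context: Cones: for a point $u$, the plane is partitioned into six cones with apex $u$, bounded by the rays from $u$ at angles $j\pi/3$ ($j=0,\dots,5$) from the positive $x$-axis; counterclockwise from the positive $x$-axis they are $\overline{C}_1, C_0, \overline{C}_2, C_1, \overline{C}_0, C_2$; $C_0,C_1,C_2$ are positive and the others negative. General position: no two points of $P$ lie on a line parallel to a cone boundary ray. Half-$\theta_6$-graph of $P$: for each $u$ and each positive cone $C$ of $u$ containing other points, add an edge from $u$ to the point of $P$ in $C$ whose orthogonal projection onto the bisector of $C$ is closest to $u$; edges weighted by Euclidean length. Canonical triangle $T_{uv}$ (for $v$ in a positive cone $C$ of $u$): the triangle bounded by the boundary rays of $C$ and the line through $v$ perpendicular to the bisector of $C$. Routing model: vertices are identified by coordinates; a deterministic $1$-local $0$-memory routing algorithm chooses the neighbour of the current vertex $s$ to forward to as a deterministic function only of $s$, the destination $t$, and the neighbours of $s$ (with coordinates), with no memory carried by the message. Path length is the sum of Euclidean edge lengths traversed until the destination is reached. *)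

theory Defs
  imports "HOL-Analysis.Analysis"
begin

type_synonym point = "real \<times> real"

definition ray_dir :: "real \<Rightarrow> point" where
  "ray_dir \<theta> = (cos \<theta>, sin \<theta>)"

definition in_sector :: "real \<Rightarrow> point \<Rightarrow> point \<Rightarrow> bool" where
  "in_sector a u v \<longleftrightarrow>
     (\<exists>s t. s > 0 \<and> t > 0 \<and> v = u + s *\<^sub>R ray_dir a + t *\<^sub>R ray_dir (a + pi/3))"

text \<open>Positive cone C_i (i = 0,1,2) of u: bounded by rays at angles (2i+1)pi/3 and (2i+2)pi/3,
  i.e. C_0 = (pi/3, 2pi/3), C_1 = (pi, 4pi/3), C_2 = (5pi/3, 2pi).\<close>
definition cone_start :: "nat \<Rightarrow> real" where
  "cone_start i = real (2*i+1) * pi / 3"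

definition pos_cone :: "nat \<Rightarrow> point \<Rightarrow> point \<Rightarrow> bool" where
  "pos_cone i u v \<longleftrightarrow> in_sector (cone_start i) u v"

definition bisector :: "nat \<Rightarrow> point" where
  "bisector i = ray_dir (cone_start i + pi/6)"

definition proj_dist :: "nat \<Rightarrow> point \<Rightarrow> point \<Rightarrow> real" where
  "proj_dist i u v = inner (v - u) (bisector i)"

definition general_position :: "point set \<Rightarrow> bool" where
  "general_position P \<longleftrightarrow>
     (\<forall>p\<in>P. \<forall>q\<in>P. p \<noteq> q \<longrightarrow> (\<forall>j::nat. \<forall>c::real. q - p \<noteq> c *\<^sub>R ray_dir (real j * pi / 3)))"

definition half_theta6_edge :: "point set \<Rightarrow> point \<Rightarrow> point \<Rightarrow> bool" where
  "half_theta6_edge P u v \<longleftrightarrow> u \<in> P \<and> v \<in> P \<and>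
     (\<exists>i<3. pos_cone i u v \<and> (\<forall>v'\<in>P. pos_cone i u v' \<longrightarrow> proj_dist i u v \<le> proj_dist i u v'))"

definition neighbours :: "point set \<Rightarrow> point \<Rightarrow> point set" where
  "neighbours P s = {v. half_theta6_edge P s v \<or> half_theta6_edge P v s}"

text \<open>A 1-local 0-memory routing algorithm is a function f of the current vertex, the destination
  and the neighbour set of the current vertex. route f P t w k is the k-th vertex visited
  when routing from w to t.\<close>
definition route :: "(point \<Rightarrow> point \<Rightarrow> point set \<Rightarrow> point) \<Rightarrow> point set \<Rightarrow> point \<Rightarrow> point \<Rightarrow> nat \<Rightarrow> point" where
  "route f P t w k = ((\<lambda>s. f s t (neighbours P s)) ^^ k) w"

definition route_length :: "(point \<Rightarrow> point \<Rightarrow> point set \<Rightarrow> point) \<Rightarrow> point set \<Rightarrow> point \<Rightarrow> point \<Rightarrow> nat \<Rightarrow> real" where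
  "route_length f P t w n = (\<Sum>k<n. dist (route f P t w k) (route f P t w (Suc k)))"

text \<open>Canonical triangle T_uw for w in positive cone i of u: its side opposite u lies on the line
  through w perpendicular to the bisector, with endpoints on the two boundary rays at distance
  h / cos(pi/6) from u, where h = proj_dist i u w. canonical_mid is the midpoint of that side.\<close>
definition canonical_corner1 :: "nat \<Rightarrow> point \<Rightarrow> point \<Rightarrow> point" where
  "canonical_corner1 i u w = u + (proj_dist i u w / cos (pi/6)) *\<^sub>R ray_dir (cone_start i)"

definition canonical_corner2 :: "nat \<Rightarrow> point \<Rightarrow> point \<Rightarrow> point" where
  "canonical_corner2 i u w = u + (proj_dist i u w / cos (pi/6)) *\<^sub>R ray_dir (cone_start i + pi/3)"

definition canonical_mid :: "nat \<Rightarrow> point \<Rightarrow> point \<Rightarrow> point" where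
  "canonical_mid i u w = midpoint (canonical_corner1 i u w) (canonical_corner2 i u w)"

definition vec_angle :: "point \<Rightarrow> point \<Rightarrow> real" where
  "vec_angle x y = arccos (inner x y / (norm x * norm y))"

end

theory Submission
  imports Defs
begin

text \<open>Put the destination t at the origin of oblique coordinates (a, b) taken along the two
  boundary rays of the positive cone of t that contains the source w. Then
  |pq|^2 = \<Delta>a^2 + \<Delta>a \<Delta>b + \<Delta>b^2, and since a rotation by 2\<pi>/3 maps (a, b) to (b, -a-b),
  the half-\<theta>6-graph becomes "nearest neighbour in a quadrant" for the three coordinate pairs
  (a, b), (b, -a-b), (-a-b, a). The canonical triangle of t through the current vertex s splits
  into the parallelogram spanned by t and s and two corner triangles. The routing enters the
  parallelogram whenever s has a neighbour there, choosing it so that an already empty corner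
  stays empty; otherwise it crosses into a corner. The potential 2a + 2b + min(a, b), lowered to
  a + 2b resp. 2a + b while the left resp. right corner is empty, drops at every step by at least
  the length of that step, so it bounds the whole path; at the source it equals
  (5/\<surd>3 cos \<alpha> - sin \<alpha>)|uw|.\<close>

lemma iterate_reaches_with_cost:
  fixes g :: "'a::metric_space \<Rightarrow> 'a" and h V :: "'a \<Rightarrow> real"
  assumes "finite S" and "s \<in> S" and "0 \<le> V t"
    and descent: "\<And>x. x \<in> S \<Longrightarrow> x \<noteq> t \<Longrightarrow>
      g x \<in> S \<and> h (g x) < h x \<and> dist x (g x) + V (g x) \<le> V x"
  shows "\<exists>n. (g ^^ n) s = t \<and> (\<forall>k<n. (g ^^ k) s \<noteq> t) \<and>
    (\<Sum>k<n. dist ((g ^^ k) s) ((g ^^ Suc k) s)) \<le> V s"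
  using \<open>s \<in> S\<close>
proof (induction "card {y\<in>S. h y < h s}" arbitrary: s rule: less_induct)
  case less
  show ?case
  proof (cases "s = t")
    case True
    then show ?thesis using \<open>0 \<le> V t\<close> by (intro exI[of _ 0]) simp
  next
    case False
    with descent less.prems have gs: "g s \<in> S" "h (g s) < h s" "dist s (g s) + V (g s) \<le> V s"
      by auto
    then have "{y\<in>S. h y < h (g s)} \<subset> {y\<in>S. h y < h s}" by auto
    then have "card {y\<in>S. h y < h (g s)} < card {y\<in>S. h y < h s}"
      using \<open>finite S\<close> by (intro psubset_card_mono) auto
    from less.hyps[OF this gs(1)] obtain m where m: "(g ^^ m) (g s) = t"
      "\<forall>k<m. (g ^^ k) (g s) \<noteq> t" "(\<Sum>k<m. dist ((g ^^ k) (g s)) ((g ^^ Suc k) (g s))) \<le> V (g s)"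
      by blast
    have shift: "(g ^^ Suc k) s = (g ^^ k) (g s)" for k
      by (simp add: funpow_Suc_right del: funpow.simps)
    have "(\<Sum>k<Suc m. dist ((g ^^ k) s) ((g ^^ Suc k) s))
        = dist s (g s) + (\<Sum>k<m. dist ((g ^^ k) (g s)) ((g ^^ Suc k) (g s)))"
      by (simp only: sum.lessThan_Suc_shift shift) simp
    then show ?thesis
      using m gs(3) False shift by (intro exI[of _ "Suc m"]) (auto simp: less_Suc_eq_0_disj)
  qed
qed

lemma arg_max_on_finite:
  fixes f :: "'a \<Rightarrow> 'b::linorder"
  assumes "finite S" "S \<noteq> {}"
  shows "arg_max_on f S \<in> S \<and> (\<forall>y\<in>S. f y \<le> f (arg_max_on f S))"
proof -
  have "Max (f ` S) \<in> f ` S" using assms by simp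
  then obtain x where "x \<in> S" "f x = Max (f ` S)" by (metis imageE)
  then have "x \<in> S" "\<And>y. y \<in> S \<Longrightarrow> \<not> f y > f x"
    using assms by (auto simp: not_less)
  then show ?thesis
    unfolding arg_max_on_def by (rule arg_maxI) (auto simp: not_less)
qed

lemma ex_less_3:
  "(\<exists>j<3. X j) \<longleftrightarrow> X 0 \<or> X 1 \<or> X (2::nat)"
  by (auto simp: numeral_3_eq_3 less_Suc_eq numeral_2_eq_2)

lemma ex_less_3_rotate:
  assumes "i < 3"
  shows "(\<exists>j<3. X j) \<longleftrightarrow> X i \<or> X (Suc i mod 3) \<or> X (Suc (Suc i mod 3) mod 3)"
proof -
  consider "i = 0" | "i = 1" | "i = 2" using assms by linarith
  then show ?thesis by cases (auto simp: ex_less_3 numeral_2_eq_2)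
qed

section \<open>Oblique coordinates\<close>

text \<open>Coordinates with respect to e1 = ray_dir \<theta>, e2 = ray_dir (\<theta> + \<pi>/3): the factors 2/3 and 2
  invert the Gram matrix ((1, 1/2), (1/2, 1)) of e1, e2.\<close>

definition oblique_fst :: "real \<Rightarrow> point \<Rightarrow> real" where
  "oblique_fst \<theta> x = 2/3 * (2 * inner x (ray_dir \<theta>) - inner x (ray_dir (\<theta> + pi/3)))"

definition oblique_snd :: "real \<Rightarrow> point \<Rightarrow> real" where
  "oblique_snd \<theta> x = 2/3 * (2 * inner x (ray_dir (\<theta> + pi/3)) - inner x (ray_dir \<theta>))"

lemma inner_ray_dir: "inner (ray_dir \<phi>) (ray_dir \<psi>) = cos (\<phi> - \<psi>)"
  by (simp add: ray_dir_def cos_diff)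

lemma ray_dir_add_pi_third:
  "ray_dir (\<theta> + pi/3) = (cos \<theta> / 2 - sqrt 3 / 2 * sin \<theta>, sin \<theta> / 2 + sqrt 3 / 2 * cos \<theta>)"
  by (simp add: ray_dir_def cos_add sin_add cos_60 sin_60)

lemma oblique_decomp:
  "x = oblique_fst \<theta> x *\<^sub>R ray_dir \<theta> + oblique_snd \<theta> x *\<^sub>R ray_dir (\<theta> + pi/3)"
proof -
  have sc: "sin \<theta> * sin \<theta> + cos \<theta> * cos \<theta> = 1"
    using sin_cos_squared_add[of \<theta>] by (simp add: power2_eq_square)
  have r: "sqrt 3 * sqrt 3 = (3::real)" by simp
  obtain x1 x2 where x: "x = (x1, x2)" by (cases x)
  show ?thesis
    unfolding oblique_fst_def oblique_snd_def ray_dir_add_pi_third x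
    by (simp add: ray_dir_def prod_eq_iff) (use sc r in algebra)
qed

lemma oblique_coords_comb:
  "oblique_fst \<theta> (a *\<^sub>R ray_dir \<theta> + b *\<^sub>R ray_dir (\<theta> + pi/3)) = a"
  "oblique_snd \<theta> (a *\<^sub>R ray_dir \<theta> + b *\<^sub>R ray_dir (\<theta> + pi/3)) = b"
  by (simp_all add: oblique_fst_def oblique_snd_def inner_add_left inner_ray_dir cos_60
      algebra_simps)

lemma oblique_coords_diff:
  "oblique_fst \<theta> (x - y) = oblique_fst \<theta> x - oblique_fst \<theta> y"
  "oblique_snd \<theta> (x - y) = oblique_snd \<theta> x - oblique_snd \<theta> y"
  by (simp_all add: oblique_fst_def oblique_snd_def inner_diff_left algebra_simps)

lemma in_sector_iff:
  "in_sector \<theta> u v \<longleftrightarrow> 0 < oblique_fst \<theta> (v - u) \<and> 0 < oblique_snd \<theta> (v - u)"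
proof
  assume "in_sector \<theta> u v"
  then obtain a b where "a > 0" "b > 0" "v - u = a *\<^sub>R ray_dir \<theta> + b *\<^sub>R ray_dir (\<theta> + pi/3)"
    unfolding in_sector_def by (auto simp: algebra_simps)
  then show "0 < oblique_fst \<theta> (v - u) \<and> 0 < oblique_snd \<theta> (v - u)"
    by (simp add: oblique_coords_comb)
next
  assume "0 < oblique_fst \<theta> (v - u) \<and> 0 < oblique_snd \<theta> (v - u)"
  moreover have "v = u + oblique_fst \<theta> (v - u) *\<^sub>R ray_dir \<theta> + oblique_snd \<theta> (v - u) *\<^sub>R ray_dir (\<theta> + pi/3)"
    using oblique_decomp[of "v - u" \<theta>] by (simp add: algebra_simps)
  ultimately show "in_sector \<theta> u v"
    unfolding in_sector_def by blast
qed

lemma norm_oblique_comb: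
  "norm (a *\<^sub>R ray_dir \<theta> + b *\<^sub>R ray_dir (\<theta> + pi/3)) = sqrt (a\<^sup>2 + a * b + b\<^sup>2)"
  by (simp add: norm_eq_sqrt_inner inner_add_left inner_add_right inner_ray_dir cos_60
      power2_eq_square algebra_simps)

lemma norm_oblique:
  "norm x = sqrt ((oblique_fst \<theta> x)\<^sup>2 + oblique_fst \<theta> x * oblique_snd \<theta> x + (oblique_snd \<theta> x)\<^sup>2)"
  by (subst oblique_decomp[of x \<theta>]) (simp only: norm_oblique_comb oblique_coords_comb)

lemma inner_oblique_comb:
  "inner (a1 *\<^sub>R ray_dir \<theta> + b1 *\<^sub>R ray_dir (\<theta> + pi/3)) (a2 *\<^sub>R ray_dir \<theta> + b2 *\<^sub>R ray_dir (\<theta> + pi/3))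
     = a1 * a2 + (a1 * b2 + b1 * a2) / 2 + b1 * b2"
  by (simp add: inner_add_left inner_add_right inner_ray_dir cos_60 algebra_simps)

lemma ray_dir_bisector:
  "ray_dir (\<theta> + pi/6) = (1 / sqrt 3) *\<^sub>R (ray_dir \<theta> + ray_dir (\<theta> + pi/3))"
proof -
  have "ray_dir \<theta> + ray_dir (\<theta> + pi/3) = sqrt 3 *\<^sub>R ray_dir (\<theta> + pi/6)"
    by (simp add: ray_dir_def cos_add sin_add cos_30 sin_30 cos_60 sin_60 algebra_simps)
  then show ?thesis by simp
qed

lemma inner_ray_dir_bisector:
  "inner x (ray_dir (\<theta> + pi/6)) = sqrt 3 / 2 * (oblique_fst \<theta> x + oblique_snd \<theta> x)"
proof -
  have "inner x (ray_dir (\<theta> + pi/6)) = (inner x (ray_dir \<theta>) + inner x (ray_dir (\<theta> + pi/3))) / sqrt 3"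
    by (simp add: ray_dir_bisector inner_add_right)
  also have "\<dots> = sqrt 3 / 2 * (oblique_fst \<theta> x + oblique_snd \<theta> x)"
    by (simp add: oblique_fst_def oblique_snd_def field_simps)
      (simp add: mult.assoc[symmetric])
  finally show ?thesis .
qed

lemma oblique_coords_rotate:
  "oblique_fst (\<theta> + 2*pi/3) x = oblique_snd \<theta> x"
  "oblique_snd (\<theta> + 2*pi/3) x = - oblique_fst \<theta> x - oblique_snd \<theta> x"
proof -
  have "ray_dir (\<theta> + 2*pi/3) = ray_dir ((\<theta> + pi/3) + pi/3)"
    by (simp add: add.assoc)
  also have "\<dots> = ray_dir (\<theta> + pi/3) - ray_dir \<theta>"
    unfolding ray_dir_add_pi_third
    by (simp add: ray_dir_def cos_add sin_add cos_60 sin_60) (simp add: field_simps)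
  finally have r1: "ray_dir (\<theta> + 2*pi/3) = ray_dir (\<theta> + pi/3) - ray_dir \<theta>" .
  have r2: "ray_dir (\<theta> + 2*pi/3 + pi/3) = - ray_dir \<theta>"
    by (simp add: ray_dir_def)
  show "oblique_fst (\<theta> + 2*pi/3) x = oblique_snd \<theta> x"
    "oblique_snd (\<theta> + 2*pi/3) x = - oblique_fst \<theta> x - oblique_snd \<theta> x"
    unfolding oblique_fst_def oblique_snd_def r1 r2 by (simp_all add: inner_diff_right algebra_simps)
qed

lemma oblique_coords_periodic:
  "oblique_fst (\<theta> + 2*pi) = oblique_fst \<theta>" "oblique_snd (\<theta> + 2*pi) = oblique_snd \<theta>"
proof -
  have "ray_dir (\<phi> + 2*pi) = ray_dir \<phi>" for \<phi> by (simp add: ray_dir_def)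
  from this[of \<theta>] this[of "\<theta> + pi/3"] show
    "oblique_fst (\<theta> + 2*pi) = oblique_fst \<theta>" "oblique_snd (\<theta> + 2*pi) = oblique_snd \<theta>"
    by (simp_all add: fun_eq_iff oblique_fst_def oblique_snd_def add.commute add.left_commute)
qed

lemma abs_inner_div_norms_le: "\<bar>inner x y / (norm x * norm y)\<bar> \<le> 1"
proof -
  have "\<bar>inner x y\<bar> \<le> norm x * norm y" by (rule Cauchy_Schwarz_ineq2)
  then show ?thesis
    by (cases "norm x * norm y = 0") (simp_all add: abs_divide abs_mult)
qed

lemma cos_vec_angle: "cos (vec_angle x y) = inner x y / (norm x * norm y)"
  using abs_inner_div_norms_le[of x y] unfolding vec_angle_def abs_le_iff by (intro cos_arccos) auto

lemma sin_vec_angle: "sin (vec_angle x y) = sqrt (1 - (inner x y / (norm x * norm y))\<^sup>2)"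
  using abs_inner_div_norms_le[of x y] by (simp add: vec_angle_def sin_arccos_abs)

lemma oblique_detour_bound:
  fixes \<theta> :: real
  assumes "0 < A" "0 < B" "0 < c"
  defines "x \<equiv> A *\<^sub>R ray_dir \<theta> + B *\<^sub>R ray_dir (\<theta> + pi/3)"
    and "y \<equiv> c *\<^sub>R ray_dir \<theta> + c *\<^sub>R ray_dir (\<theta> + pi/3)"
  shows "(5 / sqrt 3 * cos (vec_angle x y) - sin (vec_angle x y)) * norm x = 2 * A + 2 * B + min A B"
proof -
  define D where "D = sqrt (A\<^sup>2 + A * B + B\<^sup>2)"
  have D_sq: "D\<^sup>2 = A\<^sup>2 + A * B + B\<^sup>2" and D_pos: "0 < D"
    using assms by (simp_all add: D_def add_pos_pos)
  have norm_x: "norm x = D"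
    by (simp add: x_def D_def norm_oblique_comb)
  have "norm y = sqrt (3 * c\<^sup>2)"
    by (simp add: y_def norm_oblique_comb power2_eq_square)
  also have "\<dots> = sqrt 3 * c"
    using assms by (simp add: real_sqrt_mult)
  finally have norm_y: "norm y = sqrt 3 * c" .
  have "inner x y = 3 / 2 * c * (A + B)"
    unfolding x_def y_def inner_oblique_comb by (simp add: algebra_simps)
  then have ratio: "inner x y / (norm x * norm y) = sqrt 3 * (A + B) / (2 * D)"
    using assms D_pos unfolding norm_x norm_y
    by (simp add: field_simps)
  then have cos_angle: "cos (vec_angle x y) = sqrt 3 * (A + B) / (2 * D)"
    by (simp only: cos_vec_angle)
  have "(sqrt 3 * (A + B))\<^sup>2 + (A - B)\<^sup>2 = (2 * D)\<^sup>2"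
    by (simp add: power_mult_distrib D_sq) (simp add: power2_eq_square algebra_simps)
  then have "1 - (sqrt 3 * (A + B) / (2 * D))\<^sup>2 = ((A - B) / (2 * D))\<^sup>2"
    using D_pos by (simp add: power_divide field_simps)
  then have sin_angle: "sin (vec_angle x y) = \<bar>A - B\<bar> / (2 * D)"
    using D_pos by (simp add: sin_vec_angle ratio)
  have "(5 / sqrt 3 * cos (vec_angle x y) - sin (vec_angle x y)) * norm x
      = 5 / 2 * (A + B) - \<bar>A - B\<bar> / 2"
    using D_pos by (simp add: sin_angle cos_angle norm_x field_simps)
  also have "\<dots> = 2 * A + 2 * B + min A B"
    by (auto simp: min_def abs_if field_simps)
  finally show ?thesis .
qed

section \<open>Routing in oblique coordinates\<close>

definition cone_edge :: "'p set \<Rightarrow> ('p \<Rightarrow> real) \<Rightarrow> ('p \<Rightarrow> real) \<Rightarrow> 'p \<Rightarrow> 'p \<Rightarrow> bool" where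
  "cone_edge P a b p q \<longleftrightarrow> a p < a q \<and> b p < b q \<and>
     (\<forall>w\<in>P. a p < a w \<and> b p < b w \<longrightarrow> a q + b q \<le> a w + b w)"

text \<open>The three positive cones: a rotation by 2\<pi>/3 maps oblique coordinates (a, b) to (b, -a-b).\<close>

definition oblique_edge :: "'p set \<Rightarrow> ('p \<Rightarrow> real) \<Rightarrow> ('p \<Rightarrow> real) \<Rightarrow> 'p \<Rightarrow> 'p \<Rightarrow> bool" where
  "oblique_edge P a b p q \<longleftrightarrow> p \<in> P \<and> q \<in> P \<and>
     (cone_edge P a b p q \<or> cone_edge P b (\<lambda>v. - a v - b v) p q \<or> cone_edge P (\<lambda>v. - a v - b v) a p q)"

definition oblique_nbrs :: "'p set \<Rightarrow> ('p \<Rightarrow> real) \<Rightarrow> ('p \<Rightarrow> real) \<Rightarrow> 'p \<Rightarrow> 'p set" where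
  "oblique_nbrs P a b s = {v. oblique_edge P a b s v \<or> oblique_edge P a b v s}"

lemma cone_edge_swap: "cone_edge P b a = cone_edge P a b"
  by (auto simp: fun_eq_iff cone_edge_def add.commute)

lemma oblique_nbrs_swap: "oblique_nbrs P b a = oblique_nbrs P a b"
proof -
  have neg: "(\<lambda>v. - b v - a v) = (\<lambda>v. - a v - b v)" by (simp add: fun_eq_iff)
  have "oblique_edge P b a = oblique_edge P a b"
    unfolding oblique_edge_def neg cone_edge_swap[of P a b] cone_edge_swap[of P "\<lambda>v. - a v - b v" a]
      cone_edge_swap[of P b "\<lambda>v. - a v - b v"]
    by (auto simp: fun_eq_iff)
  then show ?thesis unfolding oblique_nbrs_def by simp
qed

lemma mem_oblique_nbrs_lower:
  assumes "a v < a s" "b v < b s"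
  shows "v \<in> oblique_nbrs P a b s \<longleftrightarrow> s \<in> P \<and> v \<in> P \<and> cone_edge P a b v s"
  using assms by (auto simp: oblique_nbrs_def oblique_edge_def cone_edge_def)

lemma mem_oblique_nbrs_left:
  assumes "b s < b v" "a v + b v < a s + b s"
  shows "v \<in> oblique_nbrs P a b s \<longleftrightarrow>
    s \<in> P \<and> v \<in> P \<and> (\<forall>w\<in>P. b s < b w \<and> a w + b w < a s + b s \<longrightarrow> a w \<le> a v)"
  using assms by (auto simp: oblique_nbrs_def oblique_edge_def cone_edge_def)

text \<open>With the destination at the origin, the canonical triangle {a, b \<ge> 0, a + b < a s + b s} of the
  current vertex s consists of the parallelogram spanned by the origin and s (lower_part) and two
  corner triangles, left_part a b and, with the coordinates exchanged, left_part b a.\<close>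

definition lower_part :: "('p \<Rightarrow> real) \<Rightarrow> ('p \<Rightarrow> real) \<Rightarrow> 'p \<Rightarrow> 'p set \<Rightarrow> 'p set" where
  "lower_part a b s N = {v\<in>N. 0 \<le> a v \<and> 0 \<le> b v \<and> a v < a s \<and> b v < b s}"

definition left_part :: "('p \<Rightarrow> real) \<Rightarrow> ('p \<Rightarrow> real) \<Rightarrow> 'p \<Rightarrow> 'p set \<Rightarrow> 'p set" where
  "left_part a b s N = {v\<in>N. 0 \<le> a v \<and> b s < b v \<and> a v + b v < a s + b s}"

lemma lower_part_swap: "lower_part b a = lower_part a b"
  by (auto simp: fun_eq_iff lower_part_def)

definition oblique_step :: "('p \<Rightarrow> real) \<Rightarrow> ('p \<Rightarrow> real) \<Rightarrow> 'p \<Rightarrow> 'p set \<Rightarrow> 'p" where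
  "oblique_step a b s N =
    (let Q = lower_part a b s N; L = left_part a b s N; R = left_part b a s N in
     if Q \<noteq> {} then (if L = {} \<and> (R \<noteq> {} \<or> b s \<le> a s) then arg_max_on b Q else arg_max_on a Q)
     else if R \<noteq> {} \<and> (L = {} \<or> b s \<le> a s) then (SOME v. v \<in> R) else (SOME v. v \<in> L))"

definition left_empty :: "'p set \<Rightarrow> ('p \<Rightarrow> real) \<Rightarrow> ('p \<Rightarrow> real) \<Rightarrow> 'p \<Rightarrow> bool" where
  "left_empty P a b s \<longleftrightarrow> (\<forall>z\<in>P. 0 \<le> a z \<and> 0 \<le> b z \<and> a z + b z < a s + b s \<longrightarrow> b z \<le> b s)"

definition route_budget :: "'p set \<Rightarrow> ('p \<Rightarrow> real) \<Rightarrow> ('p \<Rightarrow> real) \<Rightarrow> 'p \<Rightarrow> real" where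
  "route_budget P a b s =
    (if left_empty P a b s \<and> left_empty P b a s then min (a s + 2 * b s) (2 * a s + b s)
     else if left_empty P a b s then a s + 2 * b s
     else if left_empty P b a s then 2 * a s + b s
     else 2 * a s + 2 * b s + min (a s) (b s))"

lemma route_budget_le:
  "0 \<le> a c \<Longrightarrow> 0 \<le> b c \<Longrightarrow> route_budget P a b c \<le> 2 * a c + 2 * b c + min (a c) (b c)"
  by (auto simp: route_budget_def min_def)

lemma route_budget_le_left_empty:
  "left_empty P a b c \<Longrightarrow> route_budget P a b c \<le> a c + 2 * b c"
  by (auto simp: route_budget_def min_def)

lemma route_budget_le_right_empty:
  "left_empty P b a c \<Longrightarrow> route_budget P a b c \<le> 2 * a c + b c"
  by (auto simp: route_budget_def min_def)

lemma route_budget_swap: "route_budget P b a = route_budget P a b"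
  by (auto simp: fun_eq_iff route_budget_def min.commute add.commute)

locale oblique_frame =
  fixes P :: "'p::metric_space set" and t :: 'p and a b :: "'p \<Rightarrow> real" and N :: "'p \<Rightarrow> 'p set"
  assumes finite_P: "finite P" and t_in_P: "t \<in> P"
    and a_t: "a t = 0" and b_t: "b t = 0"
    and inj_a: "inj_on a P" and inj_b: "inj_on b P"
    and dist_coords: "\<And>p q. dist p q = sqrt ((a q - a p)\<^sup>2 + (a q - a p) * (b q - b p) + (b q - b p)\<^sup>2)"
    and N_eq: "\<And>s. N s = oblique_nbrs P a b s"

text \<open>Exchanging the coordinates mirrors the picture, so every fact about the left corner also
  holds, as mirror.\<dots>, for the right corner.\<close>

sublocale oblique_frame \<subseteq> mirror: oblique_frame P t b a N
  by unfold_locales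
    (auto simp: finite_P t_in_P a_t b_t inj_a inj_b dist_coords N_eq oblique_nbrs_swap algebra_simps)

context oblique_frame
begin

lemma a_neq: "p \<in> P \<Longrightarrow> q \<in> P \<Longrightarrow> p \<noteq> q \<Longrightarrow> a p \<noteq> a q"
  using inj_a by (auto simp: inj_on_def)

lemma N_subset: "N s \<subseteq> P"
  by (auto simp: N_eq oblique_nbrs_def oblique_edge_def)

lemma lower_part_iff:
  "v \<in> lower_part a b s (N s) \<longleftrightarrow> s \<in> P \<and> v \<in> P \<and> 0 \<le> a v \<and> 0 \<le> b v \<and> a v < a s \<and> b v < b s \<and>
     (\<forall>w\<in>P. a v < a w \<and> b v < b w \<longrightarrow> a s + b s \<le> a w + b w)"
  by (auto simp: lower_part_def N_eq mem_oblique_nbrs_lower cone_edge_def)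

lemma left_part_iff:
  "v \<in> left_part a b s (N s) \<longleftrightarrow> s \<in> P \<and> v \<in> P \<and> 0 \<le> a v \<and> b s < b v \<and> a v + b v < a s + b s \<and>
     (\<forall>w\<in>P. b s < b w \<and> a w + b w < a s + b s \<longrightarrow> a w \<le> a v)"
  by (auto simp: left_part_def N_eq mem_oblique_nbrs_left)

lemma finite_lower_part: "finite (lower_part a b s (N s))"
  using finite_P by (rule rev_finite_subset) (use N_subset in \<open>auto simp: lower_part_def\<close>)

lemma left_part_empty_iff:
  assumes "s \<in> P" "0 \<le> b s"
  shows "left_part a b s (N s) = {} \<longleftrightarrow> left_empty P a b s"
proof
  assume empty: "left_part a b s (N s) = {}"
  show "left_empty P a b s"
    unfolding left_empty_def
  proof (intro ballI impI, rule ccontr)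
    fix z assume z: "z \<in> P" "0 \<le> a z \<and> 0 \<le> b z \<and> a z + b z < a s + b s" "\<not> b z \<le> b s"
    define S where "S = {w\<in>P. b s < b w \<and> a w + b w < a s + b s}"
    have "z \<in> S" using z by (auto simp: S_def)
    then have "arg_max_on a S \<in> S \<and> (\<forall>y\<in>S. a y \<le> a (arg_max_on a S))"
      using finite_P by (intro arg_max_on_finite) (auto simp: S_def)
    with \<open>z \<in> S\<close> z assms have "arg_max_on a S \<in> left_part a b s (N s)"
      unfolding left_part_iff S_def by force
    with empty show False by simp
  qed
next
  assume "left_empty P a b s"
  with assms show "left_part a b s (N s) = {}"
    by (force simp: left_part_iff left_empty_def)
qed

lemma dist_le_lower:
  assumes "a c \<le> a s" "b c \<le> b s"
  shows "dist s c \<le> (a s - a c) + (b s - b c)"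
proof -
  have "0 \<le> (a c - a s) * (b c - b s)" using assms by (intro mult_nonpos_nonpos) auto
  then show ?thesis
    unfolding dist_coords using assms
    by (intro real_le_lsqrt) (auto simp: power2_eq_square algebra_simps)
qed

lemma dist_le_left:
  assumes "b s \<le> b c" "a c + b c \<le> a s + b s"
  shows "dist s c \<le> a s - a c"
proof -
  have "(b c - b s) * ((a c - a s) + (b c - b s)) \<le> 0" using assms by (intro mult_nonneg_nonpos) auto
  then show ?thesis
    unfolding dist_coords using assms
    by (intro real_le_lsqrt) (auto simp: power2_eq_square algebra_simps)
qed

lemma lower_part_cost:
  assumes "c \<in> lower_part a b s (N s)"
  shows "c \<in> N s \<and> 0 \<le> a c \<and> 0 \<le> b c \<and> a c < a s \<and> b c < b s \<and>
    dist s c \<le> (a s - a c) + (b s - b c)"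
  using assms dist_le_lower by (auto simp: lower_part_def)

lemma left_part_cost:
  assumes "c \<in> left_part a b s (N s)" "0 \<le> b s"
  shows "c \<in> N s \<and> 0 \<le> a c \<and> 0 \<le> b c \<and> a c + b c < a s + b s \<and> dist s c \<le> a s - a c"
  using assms dist_le_left by (auto simp: left_part_def)

lemma route_budget_target: "route_budget P a b t = 0"
  using a_t b_t by (auto simp: route_budget_def left_empty_def)

end

context oblique_frame
begin

lemma exists_undominated:
  assumes "z \<in> P" "a z + b z < a s + b s"
  obtains w where "w \<in> P" "a w + b w < a s + b s" "a z \<le> a w" "b z \<le> b w"
    "\<forall>w'\<in>P. a w < a w' \<and> b w < b w' \<longrightarrow> a s + b s \<le> a w' + b w'"
proof -
  define S where "S = {w\<in>P. a w + b w < a s + b s \<and> a z \<le> a w \<and> b z \<le> b w}"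
  define w where "w = arg_max_on (\<lambda>v. a v + b v) S"
  have "z \<in> S" using assms by (simp add: S_def)
  then have w: "w \<in> S" "\<forall>y\<in>S. a y + b y \<le> a w + b w"
    unfolding w_def using finite_P arg_max_on_finite[where f = "\<lambda>v. a v + b v" and S = S]
    by (auto simp: S_def)
  have "a s + b s \<le> a w' + b w'" if "w' \<in> P" "a w < a w'" "b w < b w'" for w'
  proof (rule ccontr)
    assume "\<not> ?thesis"
    with that w(1) have "w' \<in> S" by (auto simp: S_def)
    with w(2) that show False by fastforce
  qed
  with w(1) that show ?thesis by (auto simp: S_def)
qed

lemma lower_part_nonempty:
  assumes "s \<in> P" "0 < a s" "0 < b s" "left_empty P a b s" "left_empty P b a s"
  shows "lower_part a b s (N s) \<noteq> {}"
proof -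
  obtain w where w: "w \<in> P" "a w + b w < a s + b s" "0 \<le> a w" "0 \<le> b w"
    "\<forall>w'\<in>P. a w < a w' \<and> b w < b w' \<longrightarrow> a s + b s \<le> a w' + b w'"
    using exists_undominated[OF t_in_P, of s] assms a_t b_t by auto
  have "w \<noteq> s" using w(2) by auto
  then have "a w \<noteq> a s" "b w \<noteq> b s" using w(1) assms(1) a_neq mirror.a_neq by auto
  moreover have "a w \<le> a s" "b w \<le> b s"
    using assms(4,5) w unfolding left_empty_def by (auto simp: add.commute)
  ultimately have "w \<in> lower_part a b s (N s)"
    using w assms(1) by (simp add: lower_part_iff)
  then show ?thesis by blast
qed

lemma left_empty_lower_max:
  assumes "left_empty P a b s" "q \<in> lower_part a b s (N s)"
    and max: "\<forall>v\<in>lower_part a b s (N s). b v \<le> b q"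
  shows "left_empty P a b q"
  unfolding left_empty_def
proof (intro ballI impI, rule ccontr)
  fix z assume z: "z \<in> P" "0 \<le> a z \<and> 0 \<le> b z \<and> a z + b z < a q + b q" "\<not> b z \<le> b q"
  have q: "s \<in> P" "q \<in> P" "0 \<le> a q" "0 \<le> b q" "a q < a s" "b q < b s"
    "\<forall>w\<in>P. a q < a w \<and> b q < b w \<longrightarrow> a s + b s \<le> a w + b w"
    using assms(2) by (auto simp: lower_part_iff)
  obtain w where w: "w \<in> P" "a w + b w < a s + b s" "a z \<le> a w" "b z \<le> b w"
    "\<forall>w'\<in>P. a w < a w' \<and> b w < b w' \<longrightarrow> a s + b s \<le> a w' + b w'"
    using exists_undominated[of z s] z q by auto
  show False
  proof (cases "a q < a w")
    case True
    with q(7) w z show False by fastforce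
  next
    case False
    have "b w \<le> b s" using assms(1) w z unfolding left_empty_def by auto
    moreover have "b w \<noteq> b s" using w(1,2) q(1) mirror.a_neq by blast
    ultimately have "w \<in> lower_part a b s (N s)"
      using w z q False by (auto simp: lower_part_iff)
    with max w z show False by fastforce
  qed
qed

lemma left_empty_right_step:
  assumes "left_empty P a b s" "lower_part a b s (N s) = {}" "r \<in> left_part b a s (N s)"
  shows "left_empty P a b r"
  unfolding left_empty_def
proof (intro ballI impI, rule ccontr)
  fix z assume z: "z \<in> P" "0 \<le> a z \<and> 0 \<le> b z \<and> a z + b z < a r + b r" "\<not> b z \<le> b r"
  have r: "s \<in> P" "a s < a r" "b r + a r < b s + a s"
    "\<forall>w\<in>P. a s < a w \<and> b w + a w < b s + a s \<longrightarrow> b w \<le> b r"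
    using assms(3) by (auto simp: mirror.left_part_iff)
  obtain w where w: "w \<in> P" "a w + b w < a s + b s" "a z \<le> a w" "b z \<le> b w"
    "\<forall>w'\<in>P. a w < a w' \<and> b w < b w' \<longrightarrow> a s + b s \<le> a w' + b w'"
    using exists_undominated[of z s] z r by auto
  show False
  proof (cases "a s < a w")
    case True
    with r(4) w z show False by (auto simp: add.commute)
  next
    case False
    have "w \<noteq> s" using w(2) by auto
    then have "a w \<noteq> a s" "b w \<noteq> b s" using w(1) r(1) a_neq mirror.a_neq by auto
    moreover have "b w \<le> b s" using assms(1) w z unfolding left_empty_def by auto
    ultimately have "w \<in> lower_part a b s (N s)"
      using w z r False by (auto simp: lower_part_iff)
    with assms(2) show False by simp
  qed
qed

lemma descent_lower_left_empty:
  assumes "left_empty P a b s" "\<not> left_empty P b a s \<or> b s \<le> a s"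
    and c: "c \<in> lower_part a b s (N s)" "\<forall>v\<in>lower_part a b s (N s). b v \<le> b c"
  shows "dist s c + route_budget P a b c \<le> route_budget P a b s"
proof -
  have "left_empty P a b c"
    using assms left_empty_lower_max by blast
  then have "route_budget P a b c \<le> a c + 2 * b c"
    by (rule route_budget_le_left_empty)
  moreover have "route_budget P a b s = a s + 2 * b s"
    using assms(1,2) by (auto simp: route_budget_def min_def)
  ultimately show ?thesis
    using lower_part_cost[OF c(1)] by auto
qed

lemma descent_lower_general:
  assumes "\<not> left_empty P a b s" "\<not> left_empty P b a s" "c \<in> lower_part a b s (N s)"
  shows "dist s c + route_budget P a b c \<le> route_budget P a b s"
proof -
  note c = lower_part_cost[OF assms(3)]
  have "route_budget P a b s = 2 * a s + 2 * b s + min (a s) (b s)"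
    using assms(1,2) by (auto simp: route_budget_def)
  moreover have "min (a c) (b c) \<le> min (a s) (b s)"
    using c by (auto simp: min_def)
  moreover have "route_budget P a b c \<le> 2 * a c + 2 * b c + min (a c) (b c)"
    using c by (intro route_budget_le) auto
  ultimately show ?thesis
    using c by auto
qed

lemma descent_right_part:
  assumes "0 < a s" "lower_part a b s (N s) = {}" "c \<in> left_part b a s (N s)"
    and "\<not> left_empty P b a s" "left_empty P a b s \<or> b s \<le> a s"
  shows "dist s c + route_budget P a b c \<le> route_budget P a b s"
proof -
  note c = mirror.left_part_cost[OF assms(3) less_imp_le[OF assms(1)]]
  show ?thesis
  proof (cases "left_empty P a b s")
    case True
    then have "left_empty P a b c"
      using left_empty_right_step assms(2,3) by blast
    then have "route_budget P a b c \<le> a c + 2 * b c"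
      by (rule route_budget_le_left_empty)
    moreover have "route_budget P a b s = a s + 2 * b s"
      using True assms(4) by (auto simp: route_budget_def)
    ultimately show ?thesis
      using c by auto
  next
    case False
    then have "route_budget P a b s = 2 * a s + 2 * b s + b s"
      using assms(4,5) by (auto simp: route_budget_def min_def)
    moreover have "route_budget P a b c \<le> 2 * a c + 2 * b c + b c"
      using route_budget_le[where P = P and a = a and b = b and c = c] min.cobounded2[of "a c" "b c"] c by auto
    ultimately show ?thesis
      using c by auto
  qed
qed

end

context oblique_frame
begin

lemma descent_from_lower_part:
  assumes s: "s \<in> P" "0 < a s" "0 < b s" and Q: "lower_part a b s (N s) \<noteq> {}"
  defines "c \<equiv> oblique_step a b s (N s)"
  shows "c \<in> lower_part a b s (N s) \<and> dist s c + route_budget P a b c \<le> route_budget P a b s"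
proof -
  let ?Q = "lower_part a b s (N s)"
  have max: "arg_max_on f ?Q \<in> ?Q \<and> (\<forall>v\<in>?Q. f v \<le> f (arg_max_on f ?Q))" for f :: "'p \<Rightarrow> real"
    using arg_max_on_finite[OF finite_lower_part Q] .
  have c: "c = (if left_empty P a b s \<and> (\<not> left_empty P b a s \<or> b s \<le> a s)
      then arg_max_on b ?Q else arg_max_on a ?Q)"
    using s Q by (simp add: c_def oblique_step_def Let_def left_part_empty_iff mirror.left_part_empty_iff)
  consider "left_empty P a b s \<and> (\<not> left_empty P b a s \<or> b s \<le> a s)"
    | "left_empty P b a s" "\<not> left_empty P a b s \<or> a s < b s"
    | "\<not> left_empty P a b s" "\<not> left_empty P b a s"
    by fastforce
  then show ?thesis
  proof cases
    case 1
    then show ?thesis using c max descent_lower_left_empty by simp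
  next
    case 2
    then show ?thesis
      using c max mirror.descent_lower_left_empty[of s "arg_max_on a ?Q"]
      by (auto simp: lower_part_swap route_budget_swap)
  next
    case 3
    then show ?thesis using c max descent_lower_general by simp
  qed
qed

lemma descent_from_side_parts:
  assumes s: "s \<in> P" "0 < a s" "0 < b s" and Q: "lower_part a b s (N s) = {}"
  defines "c \<equiv> oblique_step a b s (N s)"
  shows "c \<in> left_part a b s (N s) \<union> left_part b a s (N s) \<and>
    dist s c + route_budget P a b c \<le> route_budget P a b s"
proof -
  have L_iff: "left_part a b s (N s) = {} \<longleftrightarrow> left_empty P a b s"
    using s by (simp add: left_part_empty_iff)
  have R_iff: "left_part b a s (N s) = {} \<longleftrightarrow> left_empty P b a s"
    using s by (simp add: mirror.left_part_empty_iff)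
  have not_both: "\<not> (left_empty P a b s \<and> left_empty P b a s)"
    using lower_part_nonempty s Q by blast
  show ?thesis
  proof (cases "\<not> left_empty P b a s \<and> (left_empty P a b s \<or> b s \<le> a s)")
    case True
    then have "c \<in> left_part b a s (N s)"
      using Q L_iff R_iff by (simp add: c_def oblique_step_def Let_def some_in_eq)
    with True show ?thesis
      using descent_right_part s Q by blast
  next
    case False
    then have "c \<in> left_part a b s (N s)"
      using Q L_iff R_iff not_both by (auto simp: c_def oblique_step_def Let_def some_in_eq)
    with False not_both show ?thesis
      using mirror.descent_right_part[of s c] s Q
      by (auto simp: lower_part_swap route_budget_swap)
  qed
qed

lemma oblique_step_descent:
  assumes s: "s \<in> P" "0 < a s" "0 < b s"
  defines "c \<equiv> oblique_step a b s (N s)"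
  shows "c \<in> N s \<and> 0 \<le> a c \<and> 0 \<le> b c \<and> a c + b c < a s + b s \<and>
    dist s c + route_budget P a b c \<le> route_budget P a b s"
proof (cases "lower_part a b s (N s) = {}")
  case True
  then have "c \<in> left_part a b s (N s) \<or> c \<in> left_part b a s (N s)"
    and "dist s c + route_budget P a b c \<le> route_budget P a b s"
    using descent_from_side_parts[OF s] by (auto simp: c_def)
  then show ?thesis
    using left_part_cost[of c s] mirror.left_part_cost[of c s] s by auto
next
  case False
  then have "c \<in> lower_part a b s (N s)"
    and "dist s c + route_budget P a b c \<le> route_budget P a b s"
    using descent_from_lower_part[OF s] by (auto simp: c_def)
  then show ?thesis
    using lower_part_cost[of c s] by auto
qed

theorem oblique_routing_cost:
  assumes g: "\<And>s. s \<in> P \<Longrightarrow> 0 < a s \<Longrightarrow> 0 < b s \<Longrightarrow> g s = oblique_step a b s (N s)"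
    and w: "w \<in> P" "0 \<le> a w" "0 \<le> b w"
  shows "\<exists>n. (g ^^ n) w = t \<and> (\<forall>k<n. (g ^^ k) w \<noteq> t) \<and>
    (\<Sum>k<n. dist ((g ^^ k) w) ((g ^^ Suc k) w)) \<le> route_budget P a b w"
proof (rule iterate_reaches_with_cost[where S = "{z\<in>P. 0 \<le> a z \<and> 0 \<le> b z}" and h = "\<lambda>z. a z + b z"])
  fix x assume x: "x \<in> {z\<in>P. 0 \<le> a z \<and> 0 \<le> b z}" "x \<noteq> t"
  then have "a x \<noteq> a t" "b x \<noteq> b t"
    using t_in_P a_neq mirror.a_neq by auto
  with x a_t b_t have "0 < a x" "0 < b x" by auto
  with x(1) g oblique_step_descent[of x] N_subset
  show "g x \<in> {z\<in>P. 0 \<le> a z \<and> 0 \<le> b z} \<and> a (g x) + b (g x) < a x + b x \<and>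
      dist x (g x) + route_budget P a b (g x) \<le> route_budget P a b x"
    by auto
qed (use finite_P w route_budget_target in auto)

end

section \<open>The half-\<theta>6-graph\<close>

definition cone_fst :: "nat \<Rightarrow> point \<Rightarrow> point \<Rightarrow> real" where
  "cone_fst j t v = oblique_fst (cone_start j) (v - t)"

definition cone_snd :: "nat \<Rightarrow> point \<Rightarrow> point \<Rightarrow> real" where
  "cone_snd j t v = oblique_snd (cone_start j) (v - t)"

lemma cone_coords_diff:
  "oblique_fst (cone_start j) (q - p) = cone_fst j t q - cone_fst j t p"
  "oblique_snd (cone_start j) (q - p) = cone_snd j t q - cone_snd j t p"
  using oblique_coords_diff[of _ "q - t" "p - t"] by (simp_all add: cone_fst_def cone_snd_def)

lemma cone_coords_apex: "cone_fst j t t = 0" "cone_snd j t t = 0"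
  by (simp_all add: cone_fst_def cone_snd_def oblique_fst_def oblique_snd_def)

lemma pos_cone_iff_coords:
  "pos_cone j p q \<longleftrightarrow> cone_fst j t p < cone_fst j t q \<and> cone_snd j t p < cone_snd j t q"
  by (simp add: pos_cone_def in_sector_iff cone_coords_diff[where t = t])

lemma proj_dist_coords:
  "proj_dist j p q = sqrt 3 / 2 * ((cone_fst j t q + cone_snd j t q) - (cone_fst j t p + cone_snd j t p))"
  by (simp add: proj_dist_def bisector_def inner_ray_dir_bisector cone_coords_diff[where t = t])

lemma nearest_in_cone_iff_cone_edge:
  "(pos_cone j p q \<and> (\<forall>v\<in>P. pos_cone j p v \<longrightarrow> proj_dist j p q \<le> proj_dist j p v)) \<longleftrightarrow>
    cone_edge P (cone_fst j t) (cone_snd j t) p q"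
proof -
  have "0 < sqrt 3 / (2::real)" by simp
  then show ?thesis
    unfolding cone_edge_def pos_cone_iff_coords[where t = t] proj_dist_coords[where t = t]
      mult_le_cancel_left_pos
    by auto
qed

lemma half_theta6_edge_iff_cone_edge:
  "half_theta6_edge P p q \<longleftrightarrow> p \<in> P \<and> q \<in> P \<and> (\<exists>j<3. cone_edge P (cone_fst j t) (cone_snd j t) p q)"
  by (simp add: half_theta6_edge_def nearest_in_cone_iff_cone_edge[where t = t])

lemma cone_coords_next:
  assumes "j < 3"
  shows "cone_fst (Suc j mod 3) t = cone_snd j t"
    "cone_snd (Suc j mod 3) t = (\<lambda>v. - cone_fst j t v - cone_snd j t v)"
proof -
  have "oblique_fst (cone_start (Suc j mod 3)) = oblique_fst (cone_start j + 2*pi/3) \<and>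
      oblique_snd (cone_start (Suc j mod 3)) = oblique_snd (cone_start j + 2*pi/3)"
  proof -
    consider "j = 0" | "j = 1" | "j = 2" using assms by linarith
    then show ?thesis
    proof cases
      case 3
      have "cone_start j + 2*pi/3 = cone_start (Suc j mod 3) + 2*pi"
        using 3 by (simp add: cone_start_def field_simps)
      then show ?thesis by (simp add: oblique_coords_periodic)
    qed (simp_all add: cone_start_def field_simps)
  qed
  then show "cone_fst (Suc j mod 3) t = cone_snd j t"
    "cone_snd (Suc j mod 3) t = (\<lambda>v. - cone_fst j t v - cone_snd j t v)"
    unfolding cone_fst_def cone_snd_def by (simp_all add: oblique_coords_rotate)
qed

text \<open>When s lies in an open positive cone of t, oblique_step already returns a neighbour; the
  fallback only keeps the choice inside N elsewhere.\<close>

definition theta6_route :: "point \<Rightarrow> point \<Rightarrow> point set \<Rightarrow> point" where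
  "theta6_route s t N =
    (let j = SOME j. j < 3 \<and> pos_cone j t s;
         v = oblique_step (cone_fst j t) (cone_snd j t) s N
     in if v \<in> N then v else (SOME v. v \<in> N))"

lemma theta6_route_in_neighbours: "N \<noteq> {} \<Longrightarrow> theta6_route s t N \<in> N"
  by (auto simp: theta6_route_def Let_def some_in_eq)

locale half_theta6_target =
  fixes P :: "point set" and t :: point and i :: nat
  assumes finite_P: "finite P" and general_position: "general_position P"
    and t_in_P: "t \<in> P" and cone_index: "i < 3"
begin

lemma half_theta6_edge_eq: "half_theta6_edge P = oblique_edge P (cone_fst i t) (cone_snd i t)"
proof -
  have third: "(\<lambda>v. - cone_snd i t v - (- cone_fst i t v - cone_snd i t v)) = cone_fst i t"
    by (simp add: fun_eq_iff)
  have next_index: "Suc i mod 3 < 3" by simp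
  show ?thesis
    unfolding half_theta6_edge_iff_cone_edge[abs_def, where t = t] oblique_edge_def[abs_def]
      ex_less_3_rotate[OF cone_index] cone_coords_next[OF cone_index] cone_coords_next[OF next_index] third
    ..
qed

lemma cone_fst_inj: "inj_on (cone_fst i t) P"
proof (rule inj_onI, rule ccontr)
  fix p q assume pq: "p \<in> P" "q \<in> P" "cone_fst i t p = cone_fst i t q" "p \<noteq> q"
  have "oblique_fst (cone_start i) (q - p) = 0"
    using pq(3) by (simp add: cone_coords_diff[where t = t])
  then have "q - p = oblique_snd (cone_start i) (q - p) *\<^sub>R ray_dir (cone_start i + pi/3)"
    using oblique_decomp[of "q - p" "cone_start i"] by (metis add_0 scale_zero_left)
  also have "cone_start i + pi/3 = real (2*i+2) * pi / 3"
    by (simp add: cone_start_def field_simps)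
  finally show False
    using general_position pq unfolding general_position_def by blast
qed

lemma cone_snd_inj: "inj_on (cone_snd i t) P"
proof (rule inj_onI, rule ccontr)
  fix p q assume pq: "p \<in> P" "q \<in> P" "cone_snd i t p = cone_snd i t q" "p \<noteq> q"
  have "oblique_snd (cone_start i) (q - p) = 0"
    using pq(3) by (simp add: cone_coords_diff[where t = t])
  then have "q - p = oblique_fst (cone_start i) (q - p) *\<^sub>R ray_dir (real (2*i+1) * pi / 3)"
    using oblique_decomp[of "q - p" "cone_start i"] unfolding cone_start_def
    by (metis add_0_right scale_zero_left)
  then show False
    using general_position pq unfolding general_position_def by blast
qed

lemma dist_cone_coords:
  "dist p q = sqrt ((cone_fst i t q - cone_fst i t p)\<^sup>2 +
     (cone_fst i t q - cone_fst i t p) * (cone_snd i t q - cone_snd i t p) + (cone_snd i t q - cone_snd i t p)\<^sup>2)"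
  using norm_oblique[of "q - p" "cone_start i"] by (simp add: dist_norm norm_minus_commute cone_coords_diff[where t = t])

end

sublocale half_theta6_target \<subseteq> oblique_frame P t "cone_fst i t" "cone_snd i t" "neighbours P"
  by unfold_locales
    (auto simp: finite_P t_in_P cone_coords_apex cone_fst_inj cone_snd_inj dist_cone_coords
      neighbours_def oblique_nbrs_def half_theta6_edge_eq)

context half_theta6_target
begin

lemma pos_cone_target_unique:
  assumes "j < 3" "pos_cone j t s" "pos_cone i t s"
  shows "j = i"
proof -
  have "Suc i mod 3 < 3" by simp
  have "i = j \<or> Suc i mod 3 = j \<or> Suc (Suc i mod 3) mod 3 = j"
    using ex_less_3_rotate[OF cone_index, of "\<lambda>k. k = j"] assms(1) by blast
  with assms(2,3) show ?thesis
    by (auto simp: pos_cone_iff_coords[where t = t] cone_coords_apex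
        cone_coords_next[OF cone_index] cone_coords_next[OF \<open>Suc i mod 3 < 3\<close>])
qed

lemma theta6_route_eq:
  assumes "s \<in> P" "0 < cone_fst i t s" "0 < cone_snd i t s"
  shows "theta6_route s t (neighbours P s) = oblique_step (cone_fst i t) (cone_snd i t) s (neighbours P s)"
proof -
  have "pos_cone i t s"
    using assms by (simp add: pos_cone_iff_coords[where t = t] cone_coords_apex)
  then have "(SOME j. j < 3 \<and> pos_cone j t s) = i"
    using cone_index pos_cone_target_unique by blast
  moreover have "oblique_step (cone_fst i t) (cone_snd i t) s (neighbours P s) \<in> neighbours P s"
    using oblique_step_descent[OF assms] by blast
  ultimately show ?thesis
    by (simp add: theta6_route_def Let_def)
qed

theorem theta6_route_cost:
  assumes "w \<in> P" "pos_cone i t w"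
  shows "\<exists>n. route theta6_route P t w n = t \<and> (\<forall>k<n. route theta6_route P t w k \<noteq> t) \<and>
    route_length theta6_route P t w n \<le> 2 * cone_fst i t w + 2 * cone_snd i t w + min (cone_fst i t w) (cone_snd i t w)"
proof -
  have w: "0 < cone_fst i t w" "0 < cone_snd i t w"
    using assms(2) by (simp_all add: pos_cone_iff_coords[where t = t] cone_coords_apex)
  then have "route_budget P (cone_fst i t) (cone_snd i t) w
      \<le> 2 * cone_fst i t w + 2 * cone_snd i t w + min (cone_fst i t w) (cone_snd i t w)"
    by (intro route_budget_le) auto
  moreover have "\<exists>n. route theta6_route P t w n = t \<and> (\<forall>k<n. route theta6_route P t w k \<noteq> t) \<and>
      route_length theta6_route P t w n \<le> route_budget P (cone_fst i t) (cone_snd i t) w"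
    unfolding route_def route_length_def
    using theta6_route_eq assms(1) w by (intro oblique_routing_cost) auto
  ultimately show ?thesis by fastforce
qed

end

lemma canonical_mid_oblique:
  "canonical_mid i u w - u =
     ((cone_fst i u w + cone_snd i u w) / 2) *\<^sub>R ray_dir (cone_start i) +
     ((cone_fst i u w + cone_snd i u w) / 2) *\<^sub>R ray_dir (cone_start i + pi/3)"
proof -
  have "proj_dist i u w / cos (pi/6) = cone_fst i u w + cone_snd i u w"
    by (simp add: proj_dist_coords[where t = u] cone_coords_apex cos_30)
  then show ?thesis
    by (simp add: canonical_mid_def canonical_corner1_def canonical_corner2_def midpoint_def
        prod_eq_iff field_simps)
qed

lemma detour_bound_eq:
  assumes "pos_cone i u w"
  shows "(5 / sqrt 3 * cos (vec_angle (w - u) (canonical_mid i u w - u))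
      - sin (vec_angle (w - u) (canonical_mid i u w - u))) * dist u w
    = 2 * cone_fst i u w + 2 * cone_snd i u w + min (cone_fst i u w) (cone_snd i u w)"
proof -
  have pos: "0 < cone_fst i u w" "0 < cone_snd i u w"
    using assms by (simp_all add: pos_cone_iff_coords[where t = u] cone_coords_apex)
  have "w - u = cone_fst i u w *\<^sub>R ray_dir (cone_start i) + cone_snd i u w *\<^sub>R ray_dir (cone_start i + pi/3)"
    unfolding cone_fst_def cone_snd_def by (rule oblique_decomp)
  moreover have "dist u w = norm (w - u)" by (simp add: dist_norm norm_minus_commute)
  ultimately show ?thesis
    using oblique_detour_bound[OF pos, of "(cone_fst i u w + cone_snd i u w) / 2" "cone_start i"] pos
    by (simp add: canonical_mid_oblique)
qed

theorem lemma4: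
  shows "\<exists>f :: point \<Rightarrow> point \<Rightarrow> point set \<Rightarrow> point.
    (\<forall>P s t. finite P \<and> general_position P \<and> s \<in> P \<and> t \<in> P \<and> s \<noteq> t \<and> neighbours P s \<noteq> {}
        \<longrightarrow> f s t (neighbours P s) \<in> neighbours P s) \<and>
    (\<forall>P u w i. finite P \<and> general_position P \<and> u \<in> P \<and> w \<in> P \<and> i < 3 \<and> pos_cone i u w \<longrightarrow>
        (\<exists>n. route f P u w n = u \<and> (\<forall>k<n. route f P u w k \<noteq> u) \<and>
             route_length f P u w n \<le>
               (5 / sqrt 3 * cos (vec_angle (w - u) (canonical_mid i u w - u))
                 - sin (vec_angle (w - u) (canonical_mid i u w - u))) * dist u w))"
proof (intro exI[of _ theta6_route] conjI allI impI)
  fix P s t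
  assume "finite P \<and> general_position P \<and> s \<in> P \<and> t \<in> P \<and> s \<noteq> t \<and> neighbours P s \<noteq> {}"
  then show "theta6_route s t (neighbours P s) \<in> neighbours P s"
    by (simp add: theta6_route_in_neighbours)
next
  fix P u w i
  assume hyps: "finite P \<and> general_position P \<and> u \<in> P \<and> w \<in> P \<and> i < 3 \<and> pos_cone i u w"
  then interpret half_theta6_target P u i
    by unfold_locales auto
  show "\<exists>n. route theta6_route P u w n = u \<and> (\<forall>k<n. route theta6_route P u w k \<noteq> u) \<and>
      route_length theta6_route P u w n \<le>
        (5 / sqrt 3 * cos (vec_angle (w - u) (canonical_mid i u w - u))
          - sin (vec_angle (w - u) (canonical_mid i u w - u))) * dist u w"
    using hyps theta6_route_cost detour_bound_eq by simp
qed

end
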